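(* Let $n$ be even, $V=V_1\sqcup V_2$ with $|V_1|=|V_2|=n/2$, and $0\le q<p\le 1$. Consider the complete weighted graph on $V$ with $w(u,v)=p$ for distinct $u,v$ in the same block, $w(u,v)=q$ for $u,v$ in different blocks, and $w(v,v)=0$. Let $\mathcal P$ be the set of all cuts $\{A,A^\complement\}$ with $A\subseteq V$, with cost $c(\{A,A^\complement\})=\sum_{u\in A,v\in A^\complement}w(u,v)$, and for $\Psi\in\mathbb R$ let $\mathcal P_\Psi=\{P\in\mathcal P: c(P)\le\Psi\}$. Let $a\in\mathbb N$ be the agreement parameter, and assume $a\ge 2$ and $p>3qn/(n-2a)$. Let $\xi=1+q/p$. If $$q\Bigl(\frac n2\Bigr)^2\le\Psi<\frac{n^2}{4}\,p\Bigl(\frac13\xi\Bigl(\xi-\frac{2a}{n}\Bigr)-\frac19\Bigl(\xi-\frac{2a}{n}\Bigr)^2\Bigr),$$ then the two orientations of $\mathcal P_\Psi$ induced by the blocks $V_1$ and $V_2$ are distinct, and they are exactly the $\mathcal P_\Psi$-tangles.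
   Context: An orientation of a set of cuts chooses one side of every cut in it. An orientation $O$ of $\mathcal P_\Psi$ is a $\mathcal P_\Psi$-tangle if for all (not necessarily distinct) chosen sides $A,B,C\in O$ we have $|A\cap B\cap C|\ge a$. The orientation induced by block $V_i$ picks from every cut $\{A,A^\complement\}$ the side containing the majority of the vertices of $V_i$. *)

theory Defs
  imports Complex_Main
begin

definition sbm_weight :: "'v set \<Rightarrow> 'v set \<Rightarrow> real \<Rightarrow> real \<Rightarrow> 'v \<Rightarrow> 'v \<Rightarrow> real" where
  "sbm_weight V1 V2 p q u v =
     (if u = v then 0
      else if (u \<in> V1 \<and> v \<in> V1) \<or> (u \<in> V2 \<and> v \<in> V2) then p else q)"

definition cut_cost :: "'v set \<Rightarrow> ('v \<Rightarrow> 'v \<Rightarrow> real) \<Rightarrow> 'v set \<Rightarrow> real" where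
  "cut_cost V w A = (\<Sum>u\<in>A. \<Sum>v\<in>V - A. w u v)"

text \<open>All sides of cuts in P_Psi: a cut {A, V-A} is represented by its two sides.\<close>
definition psi_sides :: "'v set \<Rightarrow> ('v \<Rightarrow> 'v \<Rightarrow> real) \<Rightarrow> real \<Rightarrow> 'v set set" where
  "psi_sides V w \<Psi> = {A. A \<subseteq> V \<and> cut_cost V w A \<le> \<Psi>}"

definition is_orientation :: "'v set \<Rightarrow> 'v set set \<Rightarrow> 'v set set \<Rightarrow> bool" where
  "is_orientation V S Or \<longleftrightarrow> Or \<subseteq> S \<and> (\<forall>A\<in>S. (A \<in> Or) \<noteq> (V - A \<in> Or))"

definition is_tangle :: "'v set \<Rightarrow> 'v set set \<Rightarrow> nat \<Rightarrow> 'v set set \<Rightarrow> bool" where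
  "is_tangle V S a Or \<longleftrightarrow> is_orientation V S Or \<and>
     (\<forall>A\<in>Or. \<forall>B\<in>Or. \<forall>C\<in>Or. card (A \<inter> B \<inter> C) \<ge> a)"

definition induced_orientation :: "'v set set \<Rightarrow> 'v set \<Rightarrow> 'v set set" where
  "induced_orientation S B = {A \<in> S. 2 * card (A \<inter> B) > card B}"

end

(*
  Write m = n/2 and R = q m / p. A side A of a cut meeting V1 in x and V2 in y vertices costs
  block_cut_cost p q m x y, a concave quadratic in (x, y). If A contains the majority of V1 and
  costs at most \<Psi>, the upper bound on \<Psi> forces either |V - A| < (m - a + R)/3 or
  |V1 - A| + |A \<inter> V2| < (m - a - 2R)/3. Three sets of these two kinds meet in at least a
  vertices, so the orientation induced by V1 is a tangle. Conversely, a tangle containing V1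
  contains every such set A: moving a single vertex z keeps the cost below \<Psi>, and if A were
  missing, V - A would be in the tangle yet disjoint from the intersection of two such modified
  sets. As V1 costs q m^2 \<le> \<Psi>, every tangle contains V1 or V2 and so is one of the two
  induced orientations.
*)

theory Submission
  imports Defs
begin

(* The cost of the cut {A, V - A} when A meets the two blocks, of size m each, in x and y vertices. *)
definition block_cut_cost :: "real \<Rightarrow> real \<Rightarrow> real \<Rightarrow> real \<Rightarrow> real \<Rightarrow> real" where
  "block_cut_cost p q m x y = p*(x*(m-x) + y*(m-y)) + q*(x*(m-y) + y*(m-x))"

lemma concave_quadratic_ge_endpoints:
  fixes c0 c1 c2 t t0 t1 L :: real
  assumes "0 \<le> c2" and t: "t0 \<le> t" "t \<le> t1"
    and "L \<le> c0 + c1*t0 - c2*t0^2" "L \<le> c0 + c1*t1 - c2*t1^2"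
  shows "L \<le> c0 + c1*t - c2*t^2"
proof (cases "t0 = t1")
  case True
  with assms show ?thesis by (metis order_antisym)
next
  case False
  with t have "t0 < t1" by simp
  have "(t1 - t0) * (c0 + c1*t - c2*t^2) =
      (t1 - t) * (c0 + c1*t0 - c2*t0^2) + (t - t0) * (c0 + c1*t1 - c2*t1^2)
      + c2 * ((t - t0) * (t1 - t) * (t1 - t0))"
    by (simp add: algebra_simps power2_eq_square)
  also have "\<dots> \<ge> (t1 - t) * L + (t - t0) * L + 0"
    using assms \<open>t0 < t1\<close> by (intro add_mono mult_left_mono mult_nonneg_nonneg) auto
  finally have "(t1 - t0) * L \<le> (t1 - t0) * (c0 + c1*t - c2*t^2)"
    by argo
  with \<open>t0 < t1\<close> show ?thesis by simp
qed

lemma quadratic_ge_on_symmetric_interval: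
  fixes m R h s :: real
  assumes "h \<le> s" "s \<le> m - R - h"
  shows "(m - h) * (h + R) \<le> (m - s) * (s + R)"
proof -
  have "(m - s) * (s + R) - (m - h) * (h + R) = (s - h) * (m - R - h - s)"
    by (simp add: algebra_simps)
  moreover have "0 \<le> (s - h) * (m - R - h - s)"
    using assms by simp
  ultimately show ?thesis by simp
qed

lemma block_cut_cost_ge:
  fixes p q m R h x y :: real
  assumes q: "0 \<le> q" "q < p" and R: "q * m = p * R" and hR: "2 * (h + R) \<le> m"
    and x: "m \<le> 2 * x" "x \<le> m" and y: "0 \<le> y" "y \<le> m"
    and co: "h + R \<le> 2 * m - x - y" and near: "h \<le> m - x + y"
  shows "p * ((m - h) * (h + R)) \<le> block_cut_cost p q m x y"
proof -
  define u where "u = m - x"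
  define g where "g s = p * ((m - s) * (s + R))" for s
  have p: "0 < p" using q by linarith
  have u: "0 \<le> u" "2 * u \<le> m" using x by (auto simp: u_def)
  have "0 \<le> q * m" using q u by simp
  hence "0 \<le> p * R" using R by simp
  hence R0: "0 \<le> R" using p by (simp add: zero_le_mult_iff)
  have g_ge: "g h \<le> g s" if "h \<le> s" "s \<le> m - R - h" for s
    using quadratic_ge_on_symmetric_interval[OF that] p by (simp add: g_def)
  have via_V1: "block_cut_cost p q m x t = g (u + t) + 2 * (p + q) * u * t" for t
    using R unfolding block_cut_cost_def g_def u_def by algebra
  have via_V: "block_cut_cost p q m x t = g (t - u) + 2 * (p - q) * u * (m - t)" for t
    using R unfolding block_cut_cost_def g_def u_def by algebra
  (* For fixed x the cost is concave in y, so only the two ends y0, y1 of the admissible range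
     matter; there via_V1 resp. via_V writes it as g at a point of [h, m - R - h] plus a
     nonnegative term. *)
  define y0 where "y0 = max 0 (h - u)"
  define y1 where "y1 = min m (m - h - R + u)"
  have "g h \<le> block_cut_cost p q m x y0"
  proof (cases "u \<le> h")
    case True
    then show ?thesis using via_V1[of y0] u q by (simp add: y0_def)
  next
    case False
    then show ?thesis using via_V1[of y0] u hR g_ge[of u] by (simp add: y0_def)
  qed
  moreover have "g h \<le> block_cut_cost p q m x y1"
  proof (cases "u \<le> h + R")
    case True
    then have "y1 - u = m - h - R" "m - y1 = h + R - u" by (simp_all add: y1_def)
    moreover have "g h \<le> g (m - h - R)" using hR R0 by (intro g_ge) auto
    moreover have "0 \<le> 2 * (p - q) * u * (h + R - u)" using True u q by simp
    ultimately show ?thesis using via_V[of y1] by (metis add_increasing2)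
  next
    case False
    then show ?thesis using via_V[of y1] u hR R0 g_ge[of "m - u"] by (simp add: y1_def)
  qed
  moreover have "y0 \<le> y" "y \<le> y1"
    using y co near by (auto simp: y0_def y1_def u_def)
  ultimately have "g h \<le> (p * x * (m - x) + q * x * m) + (p * m + q * m - 2 * q * x) * y - p * y^2"
    using p by (intro concave_quadratic_ge_endpoints[of p y0 y y1])
      (auto simp: block_cut_cost_def algebra_simps power2_eq_square)
  then show ?thesis by (simp add: g_def block_cut_cost_def algebra_simps power2_eq_square)
qed

lemma block_cut_cost_mono:
  fixes p q m u v u' v' :: real
  assumes "0 \<le> q" "q < p" "0 \<le> u'" "u' \<le> u" "0 \<le> v'" "v' \<le> v" "2 * u \<le> m" "2 * v \<le> m"
  shows "block_cut_cost p q m (m - u') (m - v') \<le> block_cut_cost p q m (m - u) (m - v)"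
proof -
  have "block_cut_cost p q m (m - u) (m - v) - block_cut_cost p q m (m - u') (m - v') =
      (u - u') * (p * (m - u - u') + q * (m - 2 * v)) + (v - v') * (p * (m - v - v') + q * (m - 2 * u'))"
    unfolding block_cut_cost_def by (simp add: algebra_simps)
  moreover have "0 \<le> (u - u') * (p * (m - u - u') + q * (m - 2 * v))"
    using assms by (intro mult_nonneg_nonneg add_nonneg_nonneg) auto
  moreover have "0 \<le> (v - v') * (p * (m - v - v') + q * (m - 2 * u'))"
    using assms by (intro mult_nonneg_nonneg add_nonneg_nonneg) auto
  ultimately show ?thesis by linarith
qed

lemma block_cut_cost_mono_within_block:
  fixes p q m R t u y :: real
  assumes "0 \<le> q" "q < p" and R: "q * m = p * R"
    and "0 \<le> t" "t \<le> u" "0 \<le> y" "u + y + t \<le> m - R"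
  shows "block_cut_cost p q m (m - t) 0 \<le> block_cut_cost p q m (m - u) y"
proof -
  have "block_cut_cost p q m (m - u) y - block_cut_cost p q m (m - t) 0 =
      (u + y - t) * (p * (m - R - (u + y + t))) + 2 * (p + q) * u * y"
    using R unfolding block_cut_cost_def by algebra
  moreover have "0 \<le> (u + y - t) * (p * (m - R - (u + y + t)))"
    using assms by (intro mult_nonneg_nonneg) auto
  moreover have "0 \<le> 2 * (p + q) * u * y"
    using assms by simp
  ultimately show ?thesis by linarith
qed

lemma card_Diff_eq:
  assumes "finite B"
  shows "real (card (B - A)) = real (card B) - real (card (A \<inter> B))"
  using card_Int_Diff[OF assms, of A] by (simp add: Int_commute)

lemma card_le_card_Int3_plus_Diffs:
  assumes "finite X"
  shows "card X \<le> card (X \<inter> A \<inter> B \<inter> C) + card (X - A) + card (X - B) + card (X - C)"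
proof -
  have "X = (X \<inter> A \<inter> B \<inter> C) \<union> (X - A) \<union> (X - B) \<union> (X - C)" by blast
  then have "card X \<le> card ((X \<inter> A \<inter> B \<inter> C) \<union> (X - A) \<union> (X - B)) + card (X - C)"
    by (metis card_Un_le)
  also have "\<dots> \<le> card ((X \<inter> A \<inter> B \<inter> C) \<union> (X - A)) + card (X - B) + card (X - C)"
    using card_Un_le by simp
  also have "\<dots> \<le> card (X \<inter> A \<inter> B \<inter> C) + card (X - A) + card (X - B) + card (X - C)"
    using card_Un_le by simp
  finally show ?thesis .
qed

lemma orientation_eq_if_subset:
  assumes "is_orientation V S Or" "is_orientation V S Or'" "Or \<subseteq> Or'"
  shows "Or = Or'"
  using assms unfolding is_orientation_def by blast

lemma tangle_mem_if_card_Diff_less: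
  assumes "is_tangle V S a Or" "A \<in> S" "card (V - A) < a"
  shows "A \<in> Or"
proof (rule ccontr)
  assume "A \<notin> Or"
  with assms have "V - A \<in> Or" unfolding is_tangle_def is_orientation_def by blast
  with assms have "a \<le> card ((V - A) \<inter> (V - A) \<inter> (V - A))" unfolding is_tangle_def by blast
  with assms show False by simp
qed

lemma tangle_memI:
  assumes "is_tangle V S a Or" "A \<in> S" "B \<in> Or" "C \<in> Or" "card ((V - A) \<inter> B \<inter> C) < a"
  shows "A \<in> Or"
proof (rule ccontr)
  assume "A \<notin> Or"
  with assms have "V - A \<in> Or" unfolding is_tangle_def is_orientation_def by blast
  with assms have "a \<le> card ((V - A) \<inter> B \<inter> C)" unfolding is_tangle_def by blast
  with assms show False by simp
qed

lemma sbm_weight_swap: "sbm_weight V2 V1 p q = sbm_weight V1 V2 p q"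
  by (auto simp: sbm_weight_def fun_eq_iff)

lemma sum_sbm_weight_V1:
  assumes "finite V1" "finite V2" "V1 \<inter> V2 = {}" "u \<in> A \<inter> V1"
  shows "(\<Sum>v\<in>(V1 \<union> V2) - A. sbm_weight V1 V2 p q u v) = p * card (V1 - A) + q * card (V2 - A)"
proof -
  have "(V1 \<union> V2) - A = (V1 - A) \<union> (V2 - A)" by blast
  then have "(\<Sum>v\<in>(V1 \<union> V2) - A. sbm_weight V1 V2 p q u v) =
      (\<Sum>v\<in>V1 - A. sbm_weight V1 V2 p q u v) + (\<Sum>v\<in>V2 - A. sbm_weight V1 V2 p q u v)"
    using assms by (simp only:) (intro sum.union_disjoint, auto)
  also have "\<dots> = (\<Sum>v\<in>V1 - A. p) + (\<Sum>v\<in>V2 - A. q)"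
    using assms by (intro arg_cong2[where f = "(+)"] sum.cong) (auto simp: sbm_weight_def)
  finally show ?thesis by simp
qed

lemma cut_cost_sbm_weight:
  assumes fin: "finite V1" "finite V2" and disj: "V1 \<inter> V2 = {}"
    and card: "card V1 = m" "card V2 = m" and A: "A \<subseteq> V1 \<union> V2"
  shows "cut_cost (V1 \<union> V2) (sbm_weight V1 V2 p q) A =
    block_cut_cost p q m (card (A \<inter> V1)) (card (A \<inter> V2))"
proof -
  let ?w = "sbm_weight V1 V2 p q"
  have A_split: "A = (A \<inter> V1) \<union> (A \<inter> V2)" using A by blast
  have "cut_cost (V1 \<union> V2) ?w A =
      (\<Sum>u\<in>A \<inter> V1. \<Sum>v\<in>(V1 \<union> V2) - A. ?w u v)
      + (\<Sum>u\<in>A \<inter> V2. \<Sum>v\<in>(V1 \<union> V2) - A. ?w u v)"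
    unfolding cut_cost_def using fin disj by (subst A_split, intro sum.union_disjoint) auto
  also have "\<dots> = (\<Sum>u\<in>A \<inter> V1. p * card (V1 - A) + q * card (V2 - A))
      + (\<Sum>u\<in>A \<inter> V2. p * card (V2 - A) + q * card (V1 - A))"
  proof (intro arg_cong2[where f = "(+)"] sum.cong refl)
    fix u assume "u \<in> A \<inter> V1"
    then show "(\<Sum>v\<in>(V1 \<union> V2) - A. ?w u v) = p * card (V1 - A) + q * card (V2 - A)"
      by (rule sum_sbm_weight_V1[OF fin disj])
  next
    fix u assume "u \<in> A \<inter> V2"
    then have "(\<Sum>v\<in>(V2 \<union> V1) - A. sbm_weight V2 V1 p q u v) = p * card (V2 - A) + q * card (V1 - A)"
      using disj by (intro sum_sbm_weight_V1[OF fin(2,1)]) auto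
    then show "(\<Sum>v\<in>(V1 \<union> V2) - A. ?w u v) = p * card (V2 - A) + q * card (V1 - A)"
      by (simp only: sbm_weight_swap Un_commute)
  qed
  finally show ?thesis
    using card_Diff_eq[OF fin(1), of A] card_Diff_eq[OF fin(2), of A] card
    by (simp add: block_cut_cost_def algebra_simps)
qed

locale two_block_sbm =
  fixes V1 V2 :: "'v set" and p q \<Psi> R :: real and m a :: nat
  assumes fin1: "finite V1" and fin2: "finite V2" and disj: "V1 \<inter> V2 = {}"
    and card1: "card V1 = m" and card2: "card V2 = m"
    and q_nonneg: "0 \<le> q" and q_less_p: "q < p" and a_ge_2: "2 \<le> a"
    and R_eq: "q * m = p * R" and R_less: "3 * R < real m - real a"
    and \<Psi>_ge: "q * (real m)^2 \<le> \<Psi>"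
    and \<Psi>_less: "\<Psi> < p * (real m + R - real a) * (2 * real m + 2 * R + real a) / 9"
begin

(* R = q m / p, so the paper's \<xi> = 1 + q/p is (m + R) / m. For A \<subseteq> V, the left-hand side
   of close_to_V1 is three times the size of the symmetric difference of A and V1. *)
abbreviation "V \<equiv> V1 \<union> V2"
abbreviation "S \<equiv> psi_sides V (sbm_weight V1 V2 p q) \<Psi>"
abbreviation "O1 \<equiv> induced_orientation S V1"
abbreviation "O2 \<equiv> induced_orientation S V2"
abbreviation "small_complement A \<equiv> 3 * real (card (V - A)) < real m - real a + R"
abbreviation "close_to_V1 A \<equiv>
  3 * (real (card (V1 - A)) + real (card (A \<inter> V2))) < real m - real a - 2 * R"

lemma finite_V: "finite V"
  using fin1 fin2 by simp

lemma p_pos: "0 < p"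
  using q_nonneg q_less_p by linarith

lemma R_nonneg: "0 \<le> R"
proof -
  have "0 \<le> p * R" using R_eq q_nonneg by (metis of_nat_0_le_iff mult_nonneg_nonneg)
  then show ?thesis using p_pos by (simp add: zero_le_mult_iff)
qed

lemma card_V1_Diff: "real (card (V1 - A)) = m - real (card (A \<inter> V1))"
  using card_Diff_eq[OF fin1] card1 by simp

lemma card_V2_Diff: "real (card (V2 - A)) = m - real (card (A \<inter> V2))"
  using card_Diff_eq[OF fin2] card2 by simp

lemma card_V_Diff: "real (card (V - A)) = real (card (V1 - A)) + real (card (V2 - A))"
proof -
  have "V - A = (V1 - A) \<union> (V2 - A)" by blast
  then have "card (V - A) = card (V1 - A) + card (V2 - A)"
    using fin1 fin2 disj by (simp only:) (intro card_Un_disjoint, auto)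
  then show ?thesis by simp
qed

lemma card_V1_Diff_le: "real (card (V1 - A)) \<le> card (V - A)"
  using card_V_Diff by simp

lemma mem_S_iff:
  "A \<in> S \<longleftrightarrow> A \<subseteq> V \<and> block_cut_cost p q m (card (A \<inter> V1)) (card (A \<inter> V2)) \<le> \<Psi>"
  unfolding psi_sides_def using cut_cost_sbm_weight[OF fin1 fin2 disj card1 card2] by auto

lemma Diff_mem_S:
  assumes "A \<in> S"
  shows "V - A \<in> S"
proof -
  have "(V - A) \<inter> V1 = V1 - A" "(V - A) \<inter> V2 = V2 - A" by auto
  then have "block_cut_cost p q m (card ((V - A) \<inter> V1)) (card ((V - A) \<inter> V2)) =
      block_cut_cost p q m (card (A \<inter> V1)) (card (A \<inter> V2))"
    by (simp add: card_V1_Diff card_V2_Diff block_cut_cost_def algebra_simps)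
  then show ?thesis using assms mem_S_iff by auto
qed

lemma majority_side_small_complement_or_close:
  assumes "A \<in> S" "m \<le> 2 * card (A \<inter> V1)"
  shows "small_complement A \<or> close_to_V1 A"
proof (rule ccontr)
  assume far: "\<not> ?thesis"
  define h where "h = (real m - real a - 2 * R) / 3"
  have "p * ((m - h) * (h + R)) \<le> block_cut_cost p q m (card (A \<inter> V1)) (card (A \<inter> V2))"
  proof (rule block_cut_cost_ge[OF q_nonneg q_less_p R_eq])
    show "2 * (h + R) \<le> m" using R_nonneg R_less by (simp add: h_def field_simps)
    show "m \<le> 2 * real (card (A \<inter> V1))" using assms(2) by linarith
    show "real (card (A \<inter> V1)) \<le> m" "real (card (A \<inter> V2)) \<le> m"
      using card_mono[OF fin1, of "A \<inter> V1"] card_mono[OF fin2, of "A \<inter> V2"] card1 card2 by auto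
    show "h + R \<le> 2 * real m - card (A \<inter> V1) - card (A \<inter> V2)"
      "h \<le> real m - card (A \<inter> V1) + card (A \<inter> V2)"
      using far card_V_Diff[of A] card_V1_Diff[of A] card_V2_Diff[of A] by (auto simp: h_def field_simps)
  qed simp
  moreover have "p * ((m - h) * (h + R)) = p * (real m + R - real a) * (2 * real m + 2 * R + real a) / 9"
    by (simp add: h_def field_simps)
  ultimately show False
    using assms(1) mem_S_iff \<Psi>_less by auto
qed

lemma mem_O1_iff: "A \<in> O1 \<longleftrightarrow> A \<in> S \<and> m < 2 * card (A \<inter> V1)"
  unfolding induced_orientation_def using card1 by auto

lemma card_Int_V1_ne_half:
  assumes "A \<in> S"
  shows "2 * card (A \<inter> V1) \<noteq> m"
proof
  assume half: "2 * card (A \<inter> V1) = m"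
  then have half_V1: "real (card (V1 - A)) = m / 2"
    using card_V1_Diff[of A] by linarith
  then have "\<not> small_complement A"
    using R_nonneg R_less card_V1_Diff_le[of A] by linarith
  moreover have "\<not> close_to_V1 A"
    using half_V1 R_nonneg by simp
  ultimately show False
    using majority_side_small_complement_or_close[OF assms] half by simp
qed

lemma orientation_O1: "is_orientation V S O1"
  unfolding is_orientation_def
proof (intro conjI ballI)
  show "O1 \<subseteq> S" using mem_O1_iff by blast
next
  fix A assume A: "A \<in> S"
  have "(V - A) \<inter> V1 = V1 - A" by blast
  then have "card ((V - A) \<inter> V1) = m - card (A \<inter> V1)"
    using card_V1_Diff[of A] card_mono[OF fin1, of "A \<inter> V1"] card1 by simp
  then show "(A \<in> O1) \<noteq> (V - A \<in> O1)"
    using Diff_mem_S[OF A] card_Int_V1_ne_half[OF A] A unfolding mem_O1_iff by auto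
qed

lemma tangle_O1: "is_tangle V S a O1"
  unfolding is_tangle_def
proof (intro conjI orientation_O1 ballI)
  fix A B C assume ABC: "A \<in> O1" "B \<in> O1" "C \<in> O1"
  have shape: "small_complement X \<or> 3 * real (card (V1 - X)) < real m - real a - 2 * R"
    if "X \<in> O1" for X
    using that majority_side_small_complement_or_close[of X] unfolding mem_O1_iff by force
  have "A \<subseteq> V" using ABC(1) mem_O1_iff mem_S_iff by blast
  then have "V \<inter> A \<inter> B \<inter> C = A \<inter> B \<inter> C" by blast
  then have cover_V: "2 * m \<le> card (A \<inter> B \<inter> C) + card (V - A) + card (V - B) + card (V - C)"
    using card_le_card_Int3_plus_Diffs[OF finite_V, of A B C] card_Un_disjoint[OF fin1 fin2 disj] card1 card2
    by simp
  have "card (V1 \<inter> A \<inter> B \<inter> C) \<le> card (A \<inter> B \<inter> C)"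
    using \<open>A \<subseteq> V\<close> finite_V by (intro card_mono) (auto intro: finite_subset)
  then have cover_V1: "m \<le> card (A \<inter> B \<inter> C) + card (V1 - A) + card (V1 - B) + card (V1 - C)"
    using card_le_card_Int3_plus_Diffs[OF fin1, of A B C] card1 by linarith
  have "real a \<le> card (A \<inter> B \<inter> C)"
    using shape[OF ABC(1)] shape[OF ABC(2)] shape[OF ABC(3)] card_V1_Diff_le[of A] card_V1_Diff_le[of B]
      card_V1_Diff_le[of C] cover_V cover_V1 R_nonneg R_less
    by (auto simp: field_simps)
  then show "a \<le> card (A \<inter> B \<inter> C)" by simp
qed

lemma small_complement_superset_mem_S:
  assumes A: "A \<in> S" "small_complement A" and X: "A \<subseteq> X" "X \<subseteq> V"
  shows "X \<in> S"
proof -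
  have "card (V1 - X) \<le> card (V1 - A)" "card (V2 - X) \<le> card (V2 - A)"
    using X fin1 fin2 by (auto intro: card_mono)
  moreover have "2 * real (card (V1 - A)) \<le> m" "2 * real (card (V2 - A)) \<le> m"
    using A(2) R_less card_V_Diff[of A] by simp_all
  ultimately have "block_cut_cost p q m (real m - card (V1 - X)) (real m - card (V2 - X))
      \<le> block_cut_cost p q m (real m - card (V1 - A)) (real m - card (V2 - A))"
    using q_nonneg q_less_p by (intro block_cut_cost_mono) auto
  then show ?thesis
    using A(1) X unfolding mem_S_iff by (simp add: card_V1_Diff card_V2_Diff)
qed

lemma close_subset_mem_S:
  assumes A: "A \<in> S" "close_to_V1 A" and X: "X \<subseteq> V1" "card (V1 - X) \<le> card (V1 - A)"
  shows "X \<in> S"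
proof -
  have "block_cut_cost p q m (real m - card (V1 - X)) 0
      \<le> block_cut_cost p q m (real m - card (V1 - A)) (card (A \<inter> V2))"
    using q_nonneg q_less_p R_eq X(2) A(2) R_nonneg
    by (intro block_cut_cost_mono_within_block) (auto simp: field_simps)
  moreover have "X \<inter> V2 = {}" using X(1) disj by blast
  ultimately show ?thesis
    using A(1) X unfolding mem_S_iff by (auto simp: card_V1_Diff card_V2_Diff)
qed

(* The two induction steps: if A \<notin> Or then V - A \<in> Or, but the two sets obtained from A by
   moving one vertex z are in Or by induction and meet V - A nowhere. *)
lemma tangle_contains_small_complement:
  assumes T: "is_tangle V S a Or"
  shows "A \<in> S \<Longrightarrow> small_complement A \<Longrightarrow> A \<in> Or"
proof (induction "card (V - A)" arbitrary: A rule: less_induct)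
  case (less A)
  show ?case
  proof (cases "card (V - A) < a")
    case True
    then show ?thesis using tangle_mem_if_card_Diff_less[OF T less.prems(1)] by blast
  next
    case False
    then have "1 < card (V - A)" using a_ge_2 by linarith
    then obtain z where z: "z \<in> V - A"
      by (metis card.empty ex_in_conv not_less_zero)
    have A_sub: "A \<subseteq> V" using less.prems(1) mem_S_iff by blast
    have step: "X \<in> Or" if X: "A \<subseteq> X" "X \<subseteq> V" "card (V - X) < card (V - A)" for X
    proof (rule less.hyps[OF X(3)])
      show "X \<in> S" by (rule small_complement_superset_mem_S[OF less.prems X(1,2)])
      have "real (card (V - X)) < card (V - A)" using X(3) by simp
      then show "small_complement X" using less.prems(2) by linarith
    qed
    have "V - (V - {z}) = {z}" "V - (A \<union> {z}) = (V - A) - {z}" using z by auto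
    then have in_Or: "V - {z} \<in> Or" "A \<union> {z} \<in> Or"
      using z A_sub finite_V \<open>1 < card (V - A)\<close> by (auto intro!: step)
    have "(V - A) \<inter> (V - {z}) \<inter> (A \<union> {z}) = {}" by blast
    then show ?thesis
      using tangle_memI[OF T less.prems(1) in_Or] a_ge_2 by simp
  qed
qed

lemma tangle_contains_close_to_V1:
  assumes T: "is_tangle V S a Or" and V1: "V1 \<in> Or"
  shows "A \<in> S \<Longrightarrow> close_to_V1 A \<Longrightarrow> A \<in> Or"
proof (induction "card (V1 - A)" arbitrary: A rule: less_induct)
  case (less A)
  show ?case
  proof (cases "card (V1 - A) < a")
    case True
    have "(V - A) \<inter> V1 \<inter> V1 = V1 - A" by blast
    with True have "card ((V - A) \<inter> V1 \<inter> V1) < a" by (simp only:)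
    then show ?thesis by (rule tangle_memI[OF T less.prems(1) V1 V1])
  next
    case False
    then have "1 < card (V1 - A)" using a_ge_2 by linarith
    then obtain z where z: "z \<in> V1 - A"
      by (metis card.empty ex_in_conv not_less_zero)
    have step: "X \<in> Or" if X: "X \<subseteq> V1" "card (V1 - X) < card (V1 - A)" for X
    proof (rule less.hyps[OF X(2)])
      show "X \<in> S" using close_subset_mem_S[OF less.prems X(1)] X(2) by simp
      have "X \<inter> V2 = {}" using X(1) disj by blast
      moreover have "real (card (V1 - X)) < card (V1 - A)" "0 \<le> real (card (A \<inter> V2))"
        using X(2) by simp_all
      ultimately show "close_to_V1 X" using less.prems(2) by simp
    qed
    have "V1 - (V1 - {z}) = {z}" "V1 - (V1 \<inter> A \<union> {z}) = (V1 - A) - {z}" using z by auto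
    then have in_Or: "V1 - {z} \<in> Or" "V1 \<inter> A \<union> {z} \<in> Or"
      using z fin1 \<open>1 < card (V1 - A)\<close> by (auto intro!: step)
    have "(V - A) \<inter> (V1 - {z}) \<inter> (V1 \<inter> A \<union> {z}) = {}" by blast
    then show ?thesis
      using tangle_memI[OF T less.prems(1) in_Or] a_ge_2 by simp
  qed
qed

lemma tangle_eq_O1:
  assumes T: "is_tangle V S a Or" and V1: "V1 \<in> Or"
  shows "Or = O1"
proof -
  have "O1 \<subseteq> Or"
  proof
    fix A assume "A \<in> O1"
    then have "A \<in> S" "m \<le> 2 * card (A \<inter> V1)" using mem_O1_iff by auto
    then show "A \<in> Or"
      using majority_side_small_complement_or_close tangle_contains_small_complement[OF T]
        tangle_contains_close_to_V1[OF T V1] by blast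
  qed
  then show ?thesis
    using orientation_eq_if_subset[OF orientation_O1] T unfolding is_tangle_def by blast
qed

lemma V1_mem_S: "V1 \<in> S"
proof -
  have "V1 \<inter> V1 = V1" "V1 \<inter> V2 = {}" using disj by auto
  then have "block_cut_cost p q m (card (V1 \<inter> V1)) (card (V1 \<inter> V2)) = q * (real m)^2"
    using card1 by (simp add: block_cut_cost_def power2_eq_square)
  then show ?thesis unfolding mem_S_iff using \<Psi>_ge by auto
qed

lemma V1_mem_O1: "V1 \<in> O1"
  using V1_mem_S R_nonneg R_less card1 unfolding mem_O1_iff by auto

lemma swapped_blocks: "two_block_sbm V2 V1 p q \<Psi> R m a"
  unfolding two_block_sbm_def
  using fin1 fin2 disj card1 card2 q_nonneg q_less_p a_ge_2 R_eq R_less \<Psi>_ge \<Psi>_less by auto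

lemma tangles_eq_induced_orientations: "O1 \<noteq> O2 \<and> {Or. is_tangle V S a Or} = {O1, O2}"
proof -
  interpret swapped: two_block_sbm V2 V1 p q \<Psi> R m a by (rule swapped_blocks)
  have same_V: "V2 \<union> V1 = V" by blast
  have O2_tangle: "is_tangle V S a O2"
    using swapped.tangle_O1 unfolding same_V sbm_weight_swap[of V2 V1 p q] .
  have O2_unique: "\<And>Or. is_tangle V S a Or \<Longrightarrow> V2 \<in> Or \<Longrightarrow> Or = O2"
    using swapped.tangle_eq_O1 unfolding same_V sbm_weight_swap[of V2 V1 p q] .
  have V1_or_V2: "V1 \<in> Or \<or> V2 \<in> Or" if "is_tangle V S a Or" for Or
  proof -
    have "(V1 \<in> Or) \<noteq> (V - V1 \<in> Or)"
      using that V1_mem_S unfolding is_tangle_def is_orientation_def by blast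
    moreover have "V - V1 = V2" using disj by blast
    ultimately show ?thesis by auto
  qed
  have "{Or. is_tangle V S a Or} = {O1, O2}"
  proof (intro set_eqI iffI)
    fix Or assume "Or \<in> {Or. is_tangle V S a Or}"
    then have T: "is_tangle V S a Or" by simp
    show "Or \<in> {O1, O2}"
      using V1_or_V2[OF T] tangle_eq_O1[OF T] O2_unique[OF T] by blast
  next
    fix Or assume "Or \<in> {O1, O2}"
    then show "Or \<in> {Or. is_tangle V S a Or}" using tangle_O1 O2_tangle by blast
  qed
  moreover have "V1 \<notin> O2"
    using disj unfolding induced_orientation_def by (simp add: Int_commute)
  then have "O1 \<noteq> O2"
    using V1_mem_O1 by blast
  ultimately show ?thesis by simp
qed

end

lemma tangle_threshold_eq:
  fixes n m p q a :: real
  assumes "n = 2 * m" "0 < m" "0 < p"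
  shows "n^2 / 4 * p * ((1/3) * (1 + q/p) * ((1 + q/p) - 2 * a / n) - (1/9) * ((1 + q/p) - 2 * a / n)^2)
    = p * (m + q * m / p - a) * (2 * m + 2 * (q * m / p) + a) / 9"
  using assms by (simp add: field_simps power2_eq_square; simp add: algebra_simps)

lemma agreement_margin:
  fixes m a p q R \<Psi> :: real
  assumes q: "0 \<le> q" "q < p" and "0 \<le> m" "0 \<le> a" and R: "q * m = p * R"
    and p_gt: "p > 3 * q * (2 * m) / (2 * m - 2 * a)"
    and \<Psi>: "q * m^2 \<le> \<Psi>" "\<Psi> < p * (m + R - a) * (2 * m + 2 * R + a) / 9"
  shows "3 * R < m - a"
proof (cases "a < m")
  case True
  then have "3 * q * (2 * m) < p * (2 * m - 2 * a)"
    using p_gt by (simp add: field_simps)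
  then have "p * (3 * R) < p * (m - a)"
    using R by (simp add: algebra_simps)
  then show ?thesis using q by (simp add: mult_less_cancel_left_pos)
next
  (* Then the hypothesis on p is void (its denominator is not positive), and instead the interval
     allowed for \<Psi> turns out to be empty. *)
  case False
  have p: "0 < p" using q by linarith
  have "0 \<le> p * R" "p * R \<le> p * m"
    using R q \<open>0 \<le> m\<close> by (metis mult_nonneg_nonneg, metis mult_right_mono less_imp_le)
  then have R_bounds: "0 \<le> R" "R \<le> m"
    using p by (simp_all add: zero_le_mult_iff)
  have "(m + R - a) * (2 * m + 2 * R + a) \<le> 9 * R * m"
  proof (cases "m + R - a \<le> 0")
    case True
    then show ?thesis
      using R_bounds \<open>0 \<le> a\<close> by (intro order_trans[OF mult_nonpos_nonneg]) auto
  next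
    case False
    have "(m + R - a) * (2 * m + 2 * R + a) \<le> R * (6 * m)"
      using False \<open>\<not> a < m\<close> R_bounds \<open>0 \<le> a\<close> by (intro mult_mono) auto
    moreover have "0 \<le> R * m" using R_bounds \<open>0 \<le> m\<close> by simp
    ultimately show ?thesis by (simp add: algebra_simps)
  qed
  then have "p * ((m + R - a) * (2 * m + 2 * R + a)) \<le> p * (9 * R * m)"
    using p by (intro mult_left_mono) auto
  also have "\<dots> = 9 * (q * m^2)"
    using R by (simp add: power2_eq_square)
  finally have "p * (m + R - a) * (2 * m + 2 * R + a) / 9 \<le> q * m^2"
    by simp
  with \<Psi> show ?thesis by linarith
qed

theorem theorem2:
  fixes V1 V2 :: "'v set" and n a :: nat and p q \<Psi> :: real
  assumes "even n"
    and "finite V1" and "finite V2" and "V1 \<inter> V2 = {}"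
    and "card V1 = n div 2" and "card V2 = n div 2"
    and "0 \<le> q" and "q < p" and "p \<le> 1"
    and "a \<ge> 2"
    and "p > 3 * q * real n / (real n - 2 * real a)"
    and "q * (real n / 2)^2 \<le> \<Psi>"
    and "\<Psi> < (real n)^2 / 4 * p *
           ((1/3) * (1 + q/p) * ((1 + q/p) - 2 * real a / real n)
            - (1/9) * ((1 + q/p) - 2 * real a / real n)^2)"
  shows "let V = V1 \<union> V2; S = psi_sides V (sbm_weight V1 V2 p q) \<Psi>;
             O1 = induced_orientation S V1; O2 = induced_orientation S V2
         in O1 \<noteq> O2 \<and> {Or. is_tangle V S a Or} = {O1, O2}"
proof -
  define m where "m = n div 2"
  define R where "R = q * m / p"
  have n: "real n = 2 * real m"
    using even_two_times_div_two[OF \<open>even n\<close>] unfolding m_def by linarith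
  have p: "0 < p" using assms(7,8) by linarith
  have R_eq: "q * m = p * R" using p by (simp add: R_def)
  have \<Psi>_ge: "q * (real m)^2 \<le> \<Psi>" using assms(12) n by simp
  have m_pos: "0 < real m"
  proof (rule ccontr)
    assume "\<not> 0 < real m"
    then show False using assms(13) \<Psi>_ge n by simp
  qed
  have \<Psi>_less: "\<Psi> < p * (real m + R - real a) * (2 * real m + 2 * R + real a) / 9"
    using assms(13) unfolding tangle_threshold_eq[OF n m_pos p] R_def .
  have "3 * R < real m - real a"
    using assms(7,8,11) R_eq \<Psi>_ge \<Psi>_less n by (intro agreement_margin[where \<Psi> = \<Psi>]) auto
  then interpret two_block_sbm V1 V2 p q \<Psi> R m a
    using assms R_eq \<Psi>_ge \<Psi>_less by unfold_locales (auto simp: m_def)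
  show ?thesis using tangles_eq_induced_orientations unfolding Let_def by simp
qed

end
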